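(* Under the hypotheses of Theorem 4.1 (stated below), including the nondegeneracy assumption $\mathcal{L}^d(\{u=v\})=0$ for the limit $u$, one has, along the same subsequence $s\to1$, $$\chi_{\{u_s>v_s\}}\to\chi_{\{u>v\}}\quad\text{and}\quad\chi_{\{u_s<v_s\}}\to\chi_{\{u<v\}}\quad\text{strongly in }L^r(\Omega)\ \text{for every } r<\infty.$$
   Context: Setting (Theorem 4.1): $\Omega\subset\mathbb{R}^d$ bounded open, $1<p<\infty$ with $p'=p/(p-1)>p^\#_1$ (where $p^\#_1=dp/[d(p-1)+p]$ if $p<d$, $1$ if $p>d$, some fixed number $>1$ if $p=d$), $0<\sigma<1$. For $s\in(\sigma,1)$: $f_s,\lambda^s_\pm\in L^{p'}(\Omega)$, $\lambda^s_\pm\ge0$, $v_s\in L^p(\Omega)$, with $f_s\to f$, $\lambda^s_\pm\to\lambda_\pm$ in $L^{p'}(\Omega)$ and $v_s\to v$ in $L^p(\Omega)$ as $s\to 1$; $(u_s,\chi^s_>,\chi^s_<)$ is a solution of the two-phase problem for $(f_s,\lambda^s_\pm,v_s)$ with $-\Delta^s_p$, and along a subsequence $u_s\to u$ in $L^p(\Omega)$, $D^su_s\to Du$ in $L^p(\mathbb{R}^d;\mathbb{R}^d)$, where $u\in W^{1,p}_0(\Omega)$ is the solution component for the limit problem with $s=1$. Fractional gradient $D^s\varphi=D(I_{1-s}\varphi)$ with $I_{1-s}$ the Riesz potential of order $1-s$ (standard normalization), extended distributionally; $\Lambda^{s,p}_0(\Omega)$ is the closure of $C^\infty_c(\Omega)$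 in the norm $(\|f\|^p_{L^p}+\|D^sf\|^p_{L^p(\mathbb{R}^d)})^{1/p}$; $D^1=D$, $\Lambda^{1,p}_0=W^{1,p}_0$; $\langle-\Delta^s_p u,w\rangle=\int_{\mathbb{R}^d}|D^su|^{p-2}D^su\cdot D^sw$. Solution of the two-phase problem for $(f,\lambda_\pm,v)$: $(u,\chi_>,\chi_<)\in\Lambda^{s,p}_0(\Omega)\times L^\infty(\Omega)^2$ with $\chi_{\{u>v\}}\le\chi_>\le\chi_{\{u\ge v\}}$, $\chi_{\{u<v\}}\le\chi_<\le\chi_{\{u\le v\}}$ a.e., and $\int_{\mathbb{R}^d}|D^su|^{p-2}D^su\cdot D^sw+\int_\Omega(\lambda_+\chi_>-\lambda_-\chi_<)w=\int_\Omega fw$ for all $w\in\Lambda^{s,p}_0(\Omega)$. *)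

theory Defs
  imports "HOL-Analysis.Analysis"
begin

definition memLp :: "real \<Rightarrow> 'a::euclidean_space set \<Rightarrow> ('a \<Rightarrow> 'b::euclidean_space) \<Rightarrow> bool" where
  "memLp p S f \<longleftrightarrow> f \<in> borel_measurable (lebesgue_on S)
      \<and> integrable (lebesgue_on S) (\<lambda>x. norm (f x) powr p)"

definition Lp_conv :: "real \<Rightarrow> 'a::euclidean_space set \<Rightarrow> 'i filter
      \<Rightarrow> ('i \<Rightarrow> 'a \<Rightarrow> 'b::euclidean_space) \<Rightarrow> ('a \<Rightarrow> 'b) \<Rightarrow> bool" where
  "Lp_conv p S F g h \<longleftrightarrow> memLp p S h \<and> (\<forall>\<^sub>F i in F. memLp p S (g i))
      \<and> ((\<lambda>i. \<integral>\<^sup>+ x. ennreal (norm (g i x - h x) powr p) \<partial>lebesgue_on S) \<longlongrightarrow> 0) F"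

definition memLinf :: "'a::euclidean_space set \<Rightarrow> ('a \<Rightarrow> real) \<Rightarrow> bool" where
  "memLinf S f \<longleftrightarrow> f \<in> borel_measurable (lebesgue_on S)
      \<and> (\<exists>M. AE x in lebesgue_on S. \<bar>f x\<bar> \<le> M)"

definition dderiv :: "'a::euclidean_space \<Rightarrow> ('a \<Rightarrow> real) \<Rightarrow> 'a \<Rightarrow> real" where
  "dderiv b f = (\<lambda>x. frechet_derivative f (at x) b)"

definition smooth_fun :: "('a::euclidean_space \<Rightarrow> real) \<Rightarrow> bool" where
  "smooth_fun f \<longleftrightarrow> (\<forall>bs. set bs \<subseteq> Basis \<longrightarrow> (\<forall>x. foldr dderiv bs f differentiable (at x)))"

definition test_fun :: "'a::euclidean_space set \<Rightarrow> ('a \<Rightarrow> real) \<Rightarrow> bool" where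
  "test_fun \<Omega> \<phi> \<longleftrightarrow> smooth_fun \<phi> \<and> compact (closure {x. \<phi> x \<noteq> 0})
      \<and> closure {x. \<phi> x \<noteq> 0} \<subseteq> \<Omega>"

text \<open>Standard normalisation of the Riesz potential of order alpha in R^d (0 < alpha < d);
  I_0 is the identity.\<close>
definition riesz_const :: "nat \<Rightarrow> real \<Rightarrow> real" where
  "riesz_const d \<alpha> = Gamma ((real d - \<alpha>) / 2) / (pi powr (real d / 2) * 2 powr \<alpha> * Gamma (\<alpha> / 2))"

definition riesz_pot :: "real \<Rightarrow> ('a::euclidean_space \<Rightarrow> real) \<Rightarrow> 'a \<Rightarrow> real" where
  "riesz_pot \<alpha> f x = (if \<alpha> = 0 then f x
     else riesz_const DIM('a) \<alpha> * (\<integral>y. f y / norm (x - y) powr (real DIM('a) - \<alpha>) \<partial>lebesgue))"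

definition grad :: "('a::euclidean_space \<Rightarrow> real) \<Rightarrow> 'a \<Rightarrow> 'a" where
  "grad f x = (\<Sum>b\<in>Basis. frechet_derivative f (at x) b *\<^sub>R b)"

definition frac_grad_test :: "real \<Rightarrow> ('a::euclidean_space \<Rightarrow> real) \<Rightarrow> 'a \<Rightarrow> 'a" where
  "frac_grad_test s \<phi> = grad (riesz_pot (1 - s) \<phi>)"

text \<open>(u, G) lies in the closure of the graph of D^s on C_c^infinity(Omega) w.r.t. the
  norm (||f||_p^p + ||D^s f||_p^p)^(1/p): i.e. u \<in> Lambda^{s,p}_0(Omega) with D^s u = G.\<close>
definition Lambda_grad :: "real \<Rightarrow> real \<Rightarrow> 'a::euclidean_space set
      \<Rightarrow> ('a \<Rightarrow> real) \<Rightarrow> ('a \<Rightarrow> 'a) \<Rightarrow> bool" where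
  "Lambda_grad s p \<Omega> u G \<longleftrightarrow> (\<exists>\<phi>. (\<forall>k. test_fun \<Omega> (\<phi> k))
      \<and> Lp_conv p UNIV sequentially \<phi> u
      \<and> Lp_conv p UNIV sequentially (\<lambda>k. frac_grad_test s (\<phi> k)) G)"

definition two_phase_sol :: "real \<Rightarrow> real \<Rightarrow> 'a::euclidean_space set
      \<Rightarrow> ('a \<Rightarrow> real) \<Rightarrow> ('a \<Rightarrow> real) \<Rightarrow> ('a \<Rightarrow> real) \<Rightarrow> ('a \<Rightarrow> real)
      \<Rightarrow> ('a \<Rightarrow> real) \<Rightarrow> ('a \<Rightarrow> 'a) \<Rightarrow> ('a \<Rightarrow> real) \<Rightarrow> ('a \<Rightarrow> real) \<Rightarrow> bool" where
  "two_phase_sol s p \<Omega> f lp lm v u G cg cl \<longleftrightarrow>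
     Lambda_grad s p \<Omega> u G \<and> memLinf \<Omega> cg \<and> memLinf \<Omega> cl
     \<and> (AE x in lebesgue_on \<Omega>. of_bool (u x > v x) \<le> cg x \<and> cg x \<le> of_bool (u x \<ge> v x))
     \<and> (AE x in lebesgue_on \<Omega>. of_bool (u x < v x) \<le> cl x \<and> cl x \<le> of_bool (u x \<le> v x))
     \<and> (\<forall>w H. Lambda_grad s p \<Omega> w H \<longrightarrow>
          (\<integral>x. norm (G x) powr (p - 2) * (G x \<bullet> H x) \<partial>lebesgue)
          + (\<integral>x. (lp x * cg x - lm x * cl x) * w x \<partial>lebesgue_on \<Omega>)
          = (\<integral>x. f x * w x \<partial>lebesgue_on \<Omega>))"

text \<open>The exponent p^#_1; q0 is the fixed number > 1 used when p = d.\<close>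
definition p_sharp1 :: "nat \<Rightarrow> real \<Rightarrow> real \<Rightarrow> real" where
  "p_sharp1 d p q0 = (if p < real d then real d * p / (real d * (p - 1) + p)
                      else if p > real d then 1 else q0)"

end

theory Submission
  imports Defs
begin

(* L^p convergence implies convergence in measure, so u_s - v_s \<rightarrow> u - v in measure.
   Outside {|u - v| \<le> \<delta>} a perturbation smaller than \<delta> cannot change the sign of u - v,
   and these sets shrink to {u = v}, which is null; hence the measure of
   {u_s > v_s} \<triangle> {u > v} tends to 0.  For indicator functions the L^r distance is a power of
   that measure. *)

definition tendsto_in_measure :: "'a measure \<Rightarrow> 'i filter
      \<Rightarrow> ('i \<Rightarrow> 'a \<Rightarrow> 'b::{real_normed_vector, second_countable_topology}) \<Rightarrow> ('a \<Rightarrow> 'b) \<Rightarrow> bool" where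
  "tendsto_in_measure M F g h \<longleftrightarrow> h \<in> borel_measurable M \<and> (\<forall>\<^sub>F i in F. g i \<in> borel_measurable M)
      \<and> (\<forall>e>0. ((\<lambda>i. emeasure M {x\<in>space M. e \<le> norm (g i x - h x)}) \<longlongrightarrow> 0) F)"

lemma tendsto_in_measureD:
  "tendsto_in_measure M F g h \<Longrightarrow> 0 < e
    \<Longrightarrow> ((\<lambda>i. emeasure M {x\<in>space M. e \<le> norm (g i x - h x)}) \<longlongrightarrow> 0) F"
  by (simp add: tendsto_in_measure_def)

lemma emeasure_norm_ge_le_nn_integral_powr:
  fixes g :: "'a \<Rightarrow> 'b::{real_normed_vector, second_countable_topology}"
  assumes g: "g \<in> borel_measurable M" and "0 < e" and "0 \<le> p"
  shows "emeasure M {x\<in>space M. e \<le> norm (g x)}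
           \<le> ennreal (1 / e powr p) * (\<integral>\<^sup>+x. ennreal (norm (g x) powr p) \<partial>M)"
proof -
  let ?B = "{x\<in>space M. e \<le> norm (g x)}"
  have "?B \<in> sets M" using g by measurable
  then have "emeasure M ?B = (\<integral>\<^sup>+x. indicator ?B x \<partial>M)"
    by simp
  also have "\<dots> \<le> (\<integral>\<^sup>+x. ennreal (1 / e powr p) * ennreal (norm (g x) powr p) \<partial>M)"
  proof (intro nn_integral_mono)
    fix x assume "x \<in> space M"
    have "e powr p \<le> norm (g x) powr p" if "e \<le> norm (g x)"
      using assms that by (intro powr_mono2) auto
    then show "indicator ?B x \<le> ennreal (1 / e powr p) * ennreal (norm (g x) powr p)"
      using \<open>0 < e\<close> by (auto simp: indicator_def simp flip: ennreal_mult)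
  qed
  also have "\<dots> = ennreal (1 / e powr p) * (\<integral>\<^sup>+x. ennreal (norm (g x) powr p) \<partial>M)"
    by (rule nn_integral_cmult) (use g in measurable)
  finally show ?thesis .
qed

lemma Lp_conv_imp_tendsto_in_measure:
  assumes "0 < p" and conv: "Lp_conv p S F g h"
  shows "tendsto_in_measure (lebesgue_on S) F g h"
  unfolding tendsto_in_measure_def
proof (intro conjI allI impI)
  let ?M = "lebesgue_on S"
  show h: "h \<in> borel_measurable ?M" and g: "\<forall>\<^sub>F i in F. g i \<in> borel_measurable ?M"
    using conv by (auto simp: Lp_conv_def memLp_def elim: eventually_mono)
  fix e :: real assume "0 < e"
  let ?I = "\<lambda>i. \<integral>\<^sup>+x. ennreal (norm (g i x - h x) powr p) \<partial>?M"
  have "(?I \<longlongrightarrow> 0) F"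
    using conv by (simp add: Lp_conv_def)
  from tendsto_mult_ennreal[OF tendsto_const this, of "ennreal (1 / e powr p)"]
  have lim: "((\<lambda>i. ennreal (1 / e powr p) * ?I i) \<longlongrightarrow> 0) F"
    by simp
  have upper: "\<forall>\<^sub>F i in F. emeasure ?M {x\<in>space ?M. e \<le> norm (g i x - h x)} \<le> ennreal (1 / e powr p) * ?I i"
    using g
  proof (rule eventually_mono)
    fix i assume "g i \<in> borel_measurable ?M"
    with h have "(\<lambda>x. g i x - h x) \<in> borel_measurable ?M"
      by (rule borel_measurable_diff[rotated])
    with \<open>0 < e\<close> \<open>0 < p\<close>
    show "emeasure ?M {x\<in>space ?M. e \<le> norm (g i x - h x)} \<le> ennreal (1 / e powr p) * ?I i"
      by (intro emeasure_norm_ge_le_nn_integral_powr) auto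
  qed
  show "((\<lambda>i. emeasure ?M {x\<in>space ?M. e \<le> norm (g i x - h x)}) \<longlongrightarrow> 0) F"
    by (rule tendsto_sandwich[OF _ upper tendsto_const lim]) simp
qed

lemma tendsto_in_measure_diff:
  assumes g: "tendsto_in_measure M F g h" and g': "tendsto_in_measure M F g' h'"
  shows "tendsto_in_measure M F (\<lambda>i x. g i x - g' i x) (\<lambda>x. h x - h' x)"
  unfolding tendsto_in_measure_def
proof (intro conjI allI impI)
  have h: "h \<in> borel_measurable M" and h': "h' \<in> borel_measurable M"
    and meas: "\<forall>\<^sub>F i in F. g i \<in> borel_measurable M \<and> g' i \<in> borel_measurable M"
    using g g' by (auto simp: tendsto_in_measure_def eventually_conj_iff)
  then show "(\<lambda>x. h x - h' x) \<in> borel_measurable M"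
    and "\<forall>\<^sub>F i in F. (\<lambda>x. g i x - g' i x) \<in> borel_measurable M"
    by (auto elim!: eventually_mono)
  fix e :: real assume "0 < e"
  define B where "B i = {x\<in>space M. e / 2 \<le> norm (g i x - h x)}" for i
  define B' where "B' i = {x\<in>space M. e / 2 \<le> norm (g' i x - h' x)}" for i
  have "((\<lambda>i. emeasure M (B i) + emeasure M (B' i)) \<longlongrightarrow> 0 + 0) F"
    unfolding B_def B'_def using \<open>0 < e\<close>
    by (intro tendsto_add tendsto_in_measureD[OF g] tendsto_in_measureD[OF g']) auto
  then have lim: "((\<lambda>i. emeasure M (B i) + emeasure M (B' i)) \<longlongrightarrow> 0) F"
    by simp
  have upper: "\<forall>\<^sub>F i in F. emeasure M {x\<in>space M. e \<le> norm ((g i x - g' i x) - (h x - h' x))}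
      \<le> emeasure M (B i) + emeasure M (B' i)"
    using meas
  proof (rule eventually_mono, elim conjE)
    fix i assume "g i \<in> borel_measurable M" "g' i \<in> borel_measurable M"
    then have sets: "B i \<in> sets M" "B' i \<in> sets M"
      using h h' unfolding B_def B'_def by measurable
    have "{x\<in>space M. e \<le> norm ((g i x - g' i x) - (h x - h' x))} \<subseteq> B i \<union> B' i"
    proof
      fix x assume "x \<in> {x\<in>space M. e \<le> norm ((g i x - g' i x) - (h x - h' x))}"
      then have "x \<in> space M" and "e \<le> norm ((g i x - g' i x) - (h x - h' x))" by auto
      moreover have "(g i x - g' i x) - (h x - h' x) = (g i x - h x) - (g' i x - h' x)"
        by (simp add: algebra_simps)
      ultimately have "e \<le> norm (g i x - h x) + norm (g' i x - h' x)"
        using norm_triangle_ineq4 order_trans by metis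
      then show "x \<in> B i \<union> B' i"
        using \<open>x \<in> space M\<close> by (auto simp: B_def B'_def)
    qed
    then have "emeasure M {x\<in>space M. e \<le> norm ((g i x - g' i x) - (h x - h' x))} \<le> emeasure M (B i \<union> B' i)"
      using sets by (intro emeasure_mono) auto
    also have "\<dots> \<le> emeasure M (B i) + emeasure M (B' i)"
      using sets by (rule emeasure_subadditive)
    finally show "emeasure M {x\<in>space M. e \<le> norm ((g i x - g' i x) - (h x - h' x))}
      \<le> emeasure M (B i) + emeasure M (B' i)" .
  qed
  show "((\<lambda>i. emeasure M {x\<in>space M. e \<le> norm ((g i x - g' i x) - (h x - h' x))}) \<longlongrightarrow> 0) F"
    by (rule tendsto_sandwich[OF _ upper tendsto_const lim]) simp
qed

lemma tendsto_emeasure_abs_le_inverse_Suc: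
  fixes w :: "'a \<Rightarrow> real"
  assumes "finite_measure M" and w: "w \<in> borel_measurable M"
  shows "(\<lambda>n. emeasure M {x\<in>space M. \<bar>w x\<bar> \<le> 1 / real (Suc n)})
           \<longlonglongrightarrow> emeasure M {x\<in>space M. w x = 0}"
proof -
  interpret finite_measure M by fact
  define A where "A n = {x\<in>space M. \<bar>w x\<bar> \<le> 1 / real (Suc n)}" for n
  have "range A \<subseteq> sets M"
    unfolding A_def using w by auto
  moreover have "decseq A"
    unfolding A_def decseq_def by (auto simp: frac_le elim!: order.trans)
  moreover have "(\<Inter>n. A n) = {x\<in>space M. w x = 0}"
  proof (intro set_eqI iffI)
    fix x assume x: "x \<in> (\<Inter>n. A n)"
    have "\<bar>w x\<bar> \<le> 0"
    proof (rule field_le_epsilon)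
      fix e :: real assume "0 < e"
      then obtain n where "1 / real (Suc n) < e"
        using nat_approx_posE by blast
      moreover have "\<bar>w x\<bar> \<le> 1 / real (Suc n)"
        using x by (auto simp: A_def)
      ultimately show "\<bar>w x\<bar> \<le> 0 + e"
        by linarith
    qed
    with x show "x \<in> {x\<in>space M. w x = 0}"
      by (auto simp: A_def)
  qed (auto simp: A_def)
  ultimately show ?thesis
    using Lim_emeasure_decseq[of A M] unfolding A_def by simp
qed

lemma tendsto_emeasure_positive_sets_mismatch:
  fixes W :: "'i \<Rightarrow> 'a \<Rightarrow> real" and w :: "'a \<Rightarrow> real"
  assumes fin: "finite_measure M" and conv: "tendsto_in_measure M F W w"
    and null: "emeasure M {x\<in>space M. w x = 0} = 0"
  shows "((\<lambda>i. emeasure M {x\<in>space M. (0 < W i x) \<noteq> (0 < w x)}) \<longlongrightarrow> 0) F"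
proof (rule order_tendstoI)
  have w: "w \<in> borel_measurable M" and meas: "\<forall>\<^sub>F i in F. W i \<in> borel_measurable M"
    using conv by (auto simp: tendsto_in_measure_def)
  define A where "A n = {x\<in>space M. \<bar>w x\<bar> \<le> 1 / real (Suc n)}" for n
  have A_sets: "A n \<in> sets M" for n
    unfolding A_def using w by auto
  fix a :: ennreal assume "0 < a"
  then obtain n where "emeasure M (A n) < a"
    using order_tendstoD(2)[OF tendsto_emeasure_abs_le_inverse_Suc[OF fin w]] null
    by (auto simp: A_def eventually_sequentially)
  define B where "B i = {x\<in>space M. 1 / real (Suc n) \<le> norm (W i x - w x)}" for i
  have "((\<lambda>i. emeasure M (A n) + emeasure M (B i)) \<longlongrightarrow> emeasure M (A n) + 0) F"
    unfolding B_def by (intro tendsto_add tendsto_const tendsto_in_measureD[OF conv]) simp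
  with \<open>emeasure M (A n) < a\<close> have "\<forall>\<^sub>F i in F. emeasure M (A n) + emeasure M (B i) < a"
    by (intro order_tendstoD(2)) auto
  with meas show "\<forall>\<^sub>F i in F. emeasure M {x\<in>space M. (0 < W i x) \<noteq> (0 < w x)} < a"
  proof (rule eventually_elim2)
    fix i assume "W i \<in> borel_measurable M" and less: "emeasure M (A n) + emeasure M (B i) < a"
    then have "B i \<in> sets M"
      unfolding B_def using w by measurable
    have "{x\<in>space M. (0 < W i x) \<noteq> (0 < w x)} \<subseteq> A n \<union> B i"
      by (auto simp: A_def B_def)
    then have "emeasure M {x\<in>space M. (0 < W i x) \<noteq> (0 < w x)} \<le> emeasure M (A n \<union> B i)"
      using A_sets \<open>B i \<in> sets M\<close> by (intro emeasure_mono) auto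
    also have "\<dots> \<le> emeasure M (A n) + emeasure M (B i)"
      using A_sets \<open>B i \<in> sets M\<close> by (rule emeasure_subadditive)
    finally show "emeasure M {x\<in>space M. (0 < W i x) \<noteq> (0 < w x)} < a"
      using less by simp
  qed
qed simp

(* No restriction on r is needed: for P = Q both sides are 0 because 0 powr r = 0. *)
lemma norm_of_bool_diff_powr:
  "norm (of_bool P - of_bool Q :: 'b::{real_normed_vector, zero_neq_one}) powr r
     = norm (1::'b) powr r * of_bool (P \<noteq> Q)"
  by (cases P; cases Q) auto

lemma memLp_of_bool:
  assumes "S \<in> lmeasurable" and R: "Measurable.pred (lebesgue_on S) R"
  shows "memLp r S (\<lambda>x. of_bool (R x) :: 'b::{euclidean_space, zero_neq_one})"
proof -
  interpret finite_measure "lebesgue_on S"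
    using \<open>S \<in> lmeasurable\<close> by (rule finite_measure_lebesgue_on)
  have meas: "(\<lambda>x. of_bool (R x) :: 'b) \<in> borel_measurable (lebesgue_on S)"
    using R by measurable
  moreover have "integrable (lebesgue_on S) (\<lambda>x. norm (of_bool (R x) :: 'b) powr r)"
  proof (rule integrable_const_bound)
    show "AE x in lebesgue_on S. norm (norm (of_bool (R x) :: 'b) powr r) \<le> norm (1::'b) powr r"
      by auto
  qed (use meas in measurable)
  ultimately show ?thesis
    by (simp add: memLp_def)
qed

lemma Lp_conv_of_bool:
  assumes S: "S \<in> lmeasurable"
    and Q: "Measurable.pred (lebesgue_on S) Q"
    and P: "\<forall>\<^sub>F i in F. Measurable.pred (lebesgue_on S) (P i)"
    and lim: "((\<lambda>i. emeasure (lebesgue_on S) {x\<in>S. P i x \<noteq> Q x}) \<longlongrightarrow> 0) F"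
  shows "Lp_conv r S F (\<lambda>i x. of_bool (P i x) :: 'b::{euclidean_space, zero_neq_one})
           (\<lambda>x. of_bool (Q x))"
  unfolding Lp_conv_def
proof (intro conjI)
  show "memLp r S (\<lambda>x. of_bool (Q x) :: 'b)"
    using S Q by (rule memLp_of_bool)
  show "\<forall>\<^sub>F i in F. memLp r S (\<lambda>x. of_bool (P i x) :: 'b)"
    using P by (rule eventually_mono) (use S in \<open>rule memLp_of_bool\<close>)
  let ?c = "norm (1::'b) powr r"
  have "\<forall>\<^sub>F i in F. ennreal ?c * emeasure (lebesgue_on S) {x\<in>S. P i x \<noteq> Q x}
      = (\<integral>\<^sup>+x. ennreal (norm (of_bool (P i x) - of_bool (Q x) :: 'b) powr r) \<partial>lebesgue_on S)"
    using P
  proof (rule eventually_mono)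
    fix i assume "Measurable.pred (lebesgue_on S) (P i)"
    then have "{x\<in>space (lebesgue_on S). P i x \<noteq> Q x} \<in> sets (lebesgue_on S)"
      using Q by measurable
    then have "ennreal ?c * emeasure (lebesgue_on S) {x\<in>S. P i x \<noteq> Q x}
        = (\<integral>\<^sup>+x. ennreal ?c * indicator {x\<in>S. P i x \<noteq> Q x} x \<partial>lebesgue_on S)"
      by (simp add: nn_integral_cmult_indicator)
    also have "\<dots> = (\<integral>\<^sup>+x. ennreal (norm (of_bool (P i x) - of_bool (Q x) :: 'b) powr r) \<partial>lebesgue_on S)"
      by (intro nn_integral_cong) (simp add: norm_of_bool_diff_powr indicator_def)
    finally show "ennreal ?c * emeasure (lebesgue_on S) {x\<in>S. P i x \<noteq> Q x}
      = (\<integral>\<^sup>+x. ennreal (norm (of_bool (P i x) - of_bool (Q x) :: 'b) powr r) \<partial>lebesgue_on S)" .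
  qed
  moreover have "((\<lambda>i. ennreal ?c * emeasure (lebesgue_on S) {x\<in>S. P i x \<noteq> Q x}) \<longlongrightarrow> 0) F"
    using tendsto_mult_ennreal[OF tendsto_const lim, of "ennreal ?c"] by simp
  ultimately show "((\<lambda>i. \<integral>\<^sup>+x. ennreal (norm (of_bool (P i x) - of_bool (Q x) :: 'b) powr r)
      \<partial>lebesgue_on S) \<longlongrightarrow> 0) F"
    by (rule Lim_transform_eventually[rotated])
qed

lemma Lp_conv_of_bool_less:
  fixes U V :: "'i \<Rightarrow> 'a::euclidean_space \<Rightarrow> real"
  assumes S: "S \<in> lmeasurable" and "0 < p"
    and U: "Lp_conv p S F U u" and V: "Lp_conv p S F V v"
    and null: "emeasure lebesgue {x\<in>S. u x = v x} = 0"
  shows "Lp_conv r S F (\<lambda>i x. of_bool (V i x < U i x) :: 'b::{euclidean_space, zero_neq_one})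
           (\<lambda>x. of_bool (v x < u x))"
proof (rule Lp_conv_of_bool[OF S])
  have conv: "tendsto_in_measure (lebesgue_on S) F (\<lambda>i x. U i x - V i x) (\<lambda>x. u x - v x)"
    using \<open>0 < p\<close> U V by (intro tendsto_in_measure_diff Lp_conv_imp_tendsto_in_measure)
  have "u \<in> borel_measurable (lebesgue_on S)" "v \<in> borel_measurable (lebesgue_on S)"
    and "\<forall>\<^sub>F i in F. U i \<in> borel_measurable (lebesgue_on S) \<and> V i \<in> borel_measurable (lebesgue_on S)"
    using U V by (auto simp: Lp_conv_def memLp_def eventually_conj_iff elim: eventually_mono)
  then show "Measurable.pred (lebesgue_on S) (\<lambda>x. v x < u x)"
    and "\<forall>\<^sub>F i in F. Measurable.pred (lebesgue_on S) (\<lambda>x. V i x < U i x)"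
    by (auto elim!: eventually_mono)
  have "emeasure (lebesgue_on S) {x\<in>space (lebesgue_on S). u x - v x = 0} = 0"
    using null S by (simp add: emeasure_restrict_space fmeasurableD)
  from tendsto_emeasure_positive_sets_mismatch[OF finite_measure_lebesgue_on[OF S] conv this]
  show "((\<lambda>i. emeasure (lebesgue_on S) {x\<in>S. (V i x < U i x) \<noteq> (v x < u x)}) \<longlongrightarrow> 0) F"
    by simp
qed

lemma Lp_conv_compose:
  assumes conv: "Lp_conv p S F g h" and k: "filterlim k F G"
  shows "Lp_conv p S G (\<lambda>j. g (k j)) h"
  unfolding Lp_conv_def
proof (intro conjI)
  show "memLp p S h" and "\<forall>\<^sub>F j in G. memLp p S (g (k j))"
    using conv k by (auto simp: Lp_conv_def filterlim_iff)
  show "((\<lambda>j. \<integral>\<^sup>+x. ennreal (norm (g (k j) x - h x) powr p) \<partial>lebesgue_on S) \<longlongrightarrow> 0) G"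
    using conv by (intro filterlim_compose[OF _ k]) (simp add: Lp_conv_def)
qed

theorem corollary4p2:
  fixes \<Omega> :: "'a::euclidean_space set"
    and p q0 \<sigma> :: real
    and f lp lm v u cg cl :: "real \<Rightarrow> 'a \<Rightarrow> real"
    and G :: "real \<Rightarrow> 'a \<Rightarrow> 'a"
    and f0 lp0 lm0 v0 u0 cg0 cl0 :: "'a \<Rightarrow> real"
    and G0 :: "'a \<Rightarrow> 'a"
    and sk :: "nat \<Rightarrow> real"
  assumes "open \<Omega>" and "bounded \<Omega>"
    and "1 < p" and "1 < q0" and "p / (p - 1) > p_sharp1 DIM('a) p q0"
    and "0 < \<sigma>" and "\<sigma> < 1"
    and "\<forall>s\<in>{\<sigma><..<1}. memLp (p / (p - 1)) \<Omega> (f s) \<and> memLp (p / (p - 1)) \<Omega> (lp s)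
           \<and> memLp (p / (p - 1)) \<Omega> (lm s) \<and> memLp p \<Omega> (v s)
           \<and> (AE x in lebesgue_on \<Omega>. lp s x \<ge> 0 \<and> lm s x \<ge> 0)"
    and "Lp_conv (p / (p - 1)) \<Omega> (at_left 1) f f0"
    and "Lp_conv (p / (p - 1)) \<Omega> (at_left 1) lp lp0"
    and "Lp_conv (p / (p - 1)) \<Omega> (at_left 1) lm lm0"
    and "Lp_conv p \<Omega> (at_left 1) v v0"
    and "\<forall>s\<in>{\<sigma><..<1}. two_phase_sol s p \<Omega> (f s) (lp s) (lm s) (v s) (u s) (G s) (cg s) (cl s)"
    and "\<forall>k. sk k \<in> {\<sigma><..<1}" and "sk \<longlonglongrightarrow> 1"
    and "Lp_conv p \<Omega> sequentially (\<lambda>k. u (sk k)) u0"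
    and "Lp_conv p UNIV sequentially (\<lambda>k. G (sk k)) G0"
    and "two_phase_sol 1 p \<Omega> f0 lp0 lm0 v0 u0 G0 cg0 cl0"
    and "emeasure lebesgue {x \<in> \<Omega>. u0 x = v0 x} = 0"
  shows "\<forall>r. 1 \<le> r \<longrightarrow>
           Lp_conv r \<Omega> sequentially (\<lambda>k x. of_bool (u (sk k) x > v (sk k) x)) (\<lambda>x. of_bool (u0 x > v0 x))
         \<and> Lp_conv r \<Omega> sequentially (\<lambda>k x. of_bool (u (sk k) x < v (sk k) x)) (\<lambda>x. of_bool (u0 x < v0 x))"
proof (intro allI impI conjI)
  fix r :: real
  have \<Omega>: "\<Omega> \<in> lmeasurable"
    using \<open>bounded \<Omega>\<close> \<open>open \<Omega>\<close> by (rule lmeasurable_open)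
  have "0 < p"
    using \<open>1 < p\<close> by simp
  have "filterlim sk (at_left 1) sequentially"
    using \<open>\<forall>k. sk k \<in> {\<sigma><..<1}\<close> \<open>sk \<longlonglongrightarrow> 1\<close>
    by (intro tendsto_imp_filterlim_at_left) auto
  with \<open>Lp_conv p \<Omega> (at_left 1) v v0\<close> have v: "Lp_conv p \<Omega> sequentially (\<lambda>k. v (sk k)) v0"
    by (rule Lp_conv_compose)
  note u = \<open>Lp_conv p \<Omega> sequentially (\<lambda>k. u (sk k)) u0\<close>
  note null = \<open>emeasure lebesgue {x \<in> \<Omega>. u0 x = v0 x} = 0\<close>
  moreover have "{x\<in>\<Omega>. v0 x = u0 x} = {x\<in>\<Omega>. u0 x = v0 x}"
    by auto
  ultimately have null': "emeasure lebesgue {x\<in>\<Omega>. v0 x = u0 x} = 0"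
    by simp
  show "Lp_conv r \<Omega> sequentially (\<lambda>k x. of_bool (u (sk k) x > v (sk k) x)) (\<lambda>x. of_bool (u0 x > v0 x))"
    using \<Omega> \<open>0 < p\<close> u v null by (rule Lp_conv_of_bool_less)
  show "Lp_conv r \<Omega> sequentially (\<lambda>k x. of_bool (u (sk k) x < v (sk k) x)) (\<lambda>x. of_bool (u0 x < v0 x))"
    using \<Omega> \<open>0 < p\<close> v u null' by (rule Lp_conv_of_bool_less)
qed

end
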